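(* Let $(\mathfrak S_A,\mathfrak E_A,\epsilon^{\mathfrak S_A})$ and $(\mathfrak S_B,\mathfrak E_B,\epsilon^{\mathfrak S_B})$ be States/Effects Chu spaces, $\Phi\in\mathfrak S_A\widetilde{\otimes}\mathfrak S_B$ and $\mathfrak l_A\in\mathfrak E_A$ with $\Phi(\mathfrak l_A,\mathfrak Y_{\mathfrak E_B})=\bot$. Then for all $\mathfrak l_B,\mathfrak l'_B\in\mathfrak E_B$ with $\mathfrak l_B\sqcap\mathfrak l'_B=\bot_{\mathfrak E_B}$, $$(\Phi(\mathfrak l_A,\mathfrak l_B),\Phi(\mathfrak l_A,\mathfrak l'_B))\in\{(\bot,N),(N,\bot),(\bot,\bot)\}.$$
   Context: The boolean domain is $\mathfrak{B}=\{Y,N,\bot\}$, ordered by $u\le v$ iff $u=\bot$ or $u=v$; nonempty infima $\bigwedge$: $Y$ (resp. $N$) if all members are $Y$ (resp. $N$), else $\bot$. Product $\bullet$: $x\bullet Y=x$, $x\bullet N=N$, $\bot\bullet\bot=\bot$ (commutative); involution $\overline{\bot}=\bot$, $\overline{Y}=N$, $\overline{N}=Y$. A space of states is a poset $(\mathfrak S,\sqsubseteq)$ with bottom $\bot_{\mathfrak S}$ in which every nonempty subset has an infimum. The natural space of effects $\mathfrak E_{\mathfrak S}$ consists of formal symbols $\mathfrak l_{(\sigma,\sigma')}$ ($\sigma,\sigma'$ with no common upper bound), $\mathfrak l_{(\sigma,\cdot)}$, $\mathfrak l_{(\cdot,\sigma)}$, $\mathfrak l_{(\cdot,\cdot)}$,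 with evaluation $\epsilon_{\mathfrak l_{(a,b)}}(\sigma)=Y$ if $a\sqsubseteq\sigma$, $N$ if $b\sqsubseteq\sigma$, $\bot$ otherwise ("$\cdot\sqsubseteq\sigma$" false), ordered by pointwise comparison of evaluations (nonempty infima exist and are pointwise). $\overline{\mathfrak l_{(a,b)}}=\mathfrak l_{(b,a)}$, $\mathfrak Y_{\mathfrak E}=\mathfrak l_{(\bot_{\mathfrak S},\cdot)}$, $\bot_{\mathfrak E}=\mathfrak l_{(\cdot,\cdot)}$ (constantly $\bot$). A States/Effects Chu space $(\mathfrak S,\mathfrak E,\epsilon)$: $\mathfrak E\subseteq\mathfrak E_{\mathfrak S}$ (induced order) such that (i) each $\sigma\ne\bot_{\mathfrak S}$ has some $\sigma'\ne\bot_{\mathfrak S}$ with $\mathfrak l_{(\sigma,\sigma')}\in\mathfrak E$; (ii) $\mathfrak E$ is closed under nonempty infima of $\mathfrak E_{\mathfrak S}$; (iii) closed under bar; (iv) contains $\mathfrak Y_{\mathfrak E},\bot_{\mathfrak E}$. The pure tensor $\sigma_A\widetilde{\otimes}\sigma_B$ is the map $\mathfrak E_A\times\mathfrak E_B\to\mathfrak B$, $(\mathfrak l_A,\mathfrak l_B)\mapsto\epsilon^{\mathfrak S_A}_{\mathfrak l_A}(\sigma_A)\bullet\epsilon^{\mathfrak S_B}_{\mathfrak l_B}(\sigma_B)$; the minimal tensor product $\mathfrak S_A\widetilde{\otimes}\mathfrak S_B$ is the set of pointwise infima of nonempty families of pure tensors. *)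

theory Defs
  imports Main
begin

datatype bdom = BY | BN | BBot

definition binf :: "bdom set \<Rightarrow> bdom" where
  "binf X = (if X = {BY} then BY else if X = {BN} then BN else BBot)"

fun bprod :: "bdom \<Rightarrow> bdom \<Rightarrow> bdom" where
  "bprod x BY = x"
| "bprod x BN = BN"
| "bprod BY BBot = BBot"
| "bprod BN BBot = BN"
| "bprod BBot BBot = BBot"

definition is_inf_of :: "'s set \<Rightarrow> ('s \<Rightarrow> 's \<Rightarrow> bool) \<Rightarrow> 's set \<Rightarrow> 's \<Rightarrow> bool" where
  "is_inf_of S le X m \<longleftrightarrow> m \<in> S \<and> (\<forall>x\<in>X. le m x) \<and>
     (\<forall>m'\<in>S. (\<forall>x\<in>X. le m' x) \<longrightarrow> le m' m)"

definition space_of_states :: "'s set \<Rightarrow> ('s \<Rightarrow> 's \<Rightarrow> bool) \<Rightarrow> bool" where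
  "space_of_states S le \<longleftrightarrow>
     (\<forall>x\<in>S. le x x) \<and>
     (\<forall>x\<in>S. \<forall>y\<in>S. le x y \<and> le y x \<longrightarrow> x = y) \<and>
     (\<forall>x\<in>S. \<forall>y\<in>S. \<forall>z\<in>S. le x y \<and> le y z \<longrightarrow> le x z) \<and>
     (\<exists>b\<in>S. \<forall>x\<in>S. le b x) \<and>
     (\<forall>X. X \<subseteq> S \<and> X \<noteq> {} \<longrightarrow> (\<exists>m. is_inf_of S le X m))"

definition bot_st :: "'s set \<Rightarrow> ('s \<Rightarrow> 's \<Rightarrow> bool) \<Rightarrow> 's" where
  "bot_st S le = (THE b. b \<in> S \<and> (\<forall>x\<in>S. le b x))"

text \<open>Formal symbol l_(a,b); None stands for the placeholder symbol.\<close>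
datatype 's eff = L "'s option" "'s option"

definition has_common_ub :: "'s set \<Rightarrow> ('s \<Rightarrow> 's \<Rightarrow> bool) \<Rightarrow> 's \<Rightarrow> 's \<Rightarrow> bool" where
  "has_common_ub S le x y \<longleftrightarrow> (\<exists>z\<in>S. le x z \<and> le y z)"

definition nat_effects :: "'s set \<Rightarrow> ('s \<Rightarrow> 's \<Rightarrow> bool) \<Rightarrow> 's eff set" where
  "nat_effects S le = {L a b | a b.
      (\<forall>x. a = Some x \<longrightarrow> x \<in> S) \<and> (\<forall>y. b = Some y \<longrightarrow> y \<in> S) \<and>
      (\<forall>x y. a = Some x \<and> b = Some y \<longrightarrow> \<not> has_common_ub S le x y)}"

fun eval :: "('s \<Rightarrow> 's \<Rightarrow> bool) \<Rightarrow> 's eff \<Rightarrow> 's \<Rightarrow> bdom" where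
  "eval le (L a b) \<sigma> =
     (if (\<exists>x. a = Some x \<and> le x \<sigma>) then BY
      else if (\<exists>y. b = Some y \<and> le y \<sigma>) then BN
      else BBot)"

definition eff_bar :: "'s eff \<Rightarrow> 's eff" where
  "eff_bar l = (case l of L a b \<Rightarrow> L b a)"

definition eff_Y :: "'s set \<Rightarrow> ('s \<Rightarrow> 's \<Rightarrow> bool) \<Rightarrow> 's eff" where
  "eff_Y S le = L (Some (bot_st S le)) None"

definition eff_bot :: "'s eff" where
  "eff_bot = L None None"

definition eff_is_inf :: "'s set \<Rightarrow> ('s \<Rightarrow> 's \<Rightarrow> bool) \<Rightarrow> 's eff set \<Rightarrow> 's eff \<Rightarrow> bool" where
  "eff_is_inf S le F l \<longleftrightarrow> (\<forall>\<sigma>\<in>S. eval le l \<sigma> = binf ((\<lambda>f. eval le f \<sigma>) ` F))"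

definition chu_space :: "'s set \<Rightarrow> ('s \<Rightarrow> 's \<Rightarrow> bool) \<Rightarrow> 's eff set \<Rightarrow> bool" where
  "chu_space S le E \<longleftrightarrow>
     space_of_states S le \<and>
     E \<subseteq> nat_effects S le \<and>
     (\<forall>\<sigma>\<in>S. \<sigma> \<noteq> bot_st S le \<longrightarrow>
        (\<exists>\<sigma>'\<in>S. \<sigma>' \<noteq> bot_st S le \<and> L (Some \<sigma>) (Some \<sigma>') \<in> E)) \<and>
     (\<forall>F. F \<subseteq> E \<and> F \<noteq> {} \<longrightarrow> (\<exists>l\<in>E. eff_is_inf S le F l)) \<and>
     (\<forall>l\<in>E. eff_bar l \<in> E) \<and>
     eff_Y S le \<in> E \<and> eff_bot \<in> E"

definition pure_tensor ::
  "('a \<Rightarrow> 'a \<Rightarrow> bool) \<Rightarrow> ('b \<Rightarrow> 'b \<Rightarrow> bool) \<Rightarrow> 'a \<Rightarrow> 'b \<Rightarrow> 'a eff \<Rightarrow> 'b eff \<Rightarrow> bdom" where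
  "pure_tensor leA leB \<sigma>A \<sigma>B lA lB = bprod (eval leA lA \<sigma>A) (eval leB lB \<sigma>B)"

definition min_tensor ::
  "'a set \<Rightarrow> ('a \<Rightarrow> 'a \<Rightarrow> bool) \<Rightarrow> 'a eff set \<Rightarrow>
   'b set \<Rightarrow> ('b \<Rightarrow> 'b \<Rightarrow> bool) \<Rightarrow> 'b eff set \<Rightarrow> ('a eff \<Rightarrow> 'b eff \<Rightarrow> bdom) set" where
  "min_tensor SA leA EA SB leB EB =
     {\<Phi>. \<exists>P. P \<subseteq> SA \<times> SB \<and> P \<noteq> {} \<and>
        (\<forall>lA\<in>EA. \<forall>lB\<in>EB.
           \<Phi> lA lB = binf ((\<lambda>(\<sigma>A, \<sigma>B). pure_tensor leA leB \<sigma>A \<sigma>B lA lB) ` P))}"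

end

theory Submission
  imports Defs
begin

text \<open>The unit effect Y of B is Y on every state, so \<Phi>(lA, Y) is the infimum of the values lA(\<sigma>A)
  for (\<sigma>A, \<sigma>B) \<in> P; that it is \<bottom> yields a pair p with lA(pA) \<noteq> Y and a pair q with
  lA(qA) \<noteq> N. By p, no \<Phi>(lA, l) is Y, since a product with a factor other than Y is not Y.
  By q, \<Phi>(lA, lB) and \<Phi>(lA, lB') are not both N: as lA(qA) \<noteq> N, both lB and lB' would be N
  at qB, contradicting lB \<sqinter> lB' = \<bottom>. No property of the Chu space A is needed.\<close>

lemma binf_eq_BY_iff: "X \<noteq> {} \<Longrightarrow> binf X = BY \<longleftrightarrow> (\<forall>x\<in>X. x = BY)"
  unfolding binf_def by auto

lemma binf_eq_BN_iff: "X \<noteq> {} \<Longrightarrow> binf X = BN \<longleftrightarrow> (\<forall>x\<in>X. x = BN)"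
  unfolding binf_def by auto

lemma binf_eq_BBot_iff: "X \<noteq> {} \<Longrightarrow> binf X = BBot \<longleftrightarrow> (\<exists>x\<in>X. x \<noteq> BY) \<and> (\<exists>x\<in>X. x \<noteq> BN)"
  using binf_eq_BY_iff binf_eq_BN_iff by (metis bdom.distinct(2,4,6) bdom.exhaust)

lemma bprod_eq_BY_iff: "bprod x y = BY \<longleftrightarrow> x = BY \<and> y = BY"
  by (cases x; cases y) auto

lemma bprod_eq_BN_right: "bprod x y = BN \<Longrightarrow> x \<noteq> BN \<Longrightarrow> y = BN"
  by (cases x; cases y) auto

lemma space_of_states_bot_st:
  assumes "space_of_states S le"
  shows "bot_st S le \<in> S" and "\<And>x. x \<in> S \<Longrightarrow> le (bot_st S le) x"
proof -
  obtain b where b: "b \<in> S" "\<forall>x\<in>S. le b x"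
    using assms unfolding space_of_states_def by (elim conjE) blast
  have antisym: "\<forall>x\<in>S. \<forall>y\<in>S. le x y \<and> le y x \<longrightarrow> x = y"
    using assms unfolding space_of_states_def by (elim conjE)
  have "\<exists>!b. b \<in> S \<and> (\<forall>x\<in>S. le b x)"
    using b antisym by (intro ex1I[of _ b]) auto
  then have "bot_st S le \<in> S \<and> (\<forall>x\<in>S. le (bot_st S le) x)"
    unfolding bot_st_def by (rule theI')
  then show "bot_st S le \<in> S" and "\<And>x. x \<in> S \<Longrightarrow> le (bot_st S le) x"
    by auto
qed

lemma eval_eff_Y:
  "space_of_states S le \<Longrightarrow> \<sigma> \<in> S \<Longrightarrow> eval le (eff_Y S le) \<sigma> = BY"
  unfolding eff_Y_def by (auto dest: space_of_states_bot_st)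

lemma eval_eff_bot: "eval le eff_bot \<sigma> = BBot"
  unfolding eff_bot_def by simp

definition tensor_inf ::
  "('a \<Rightarrow> 'a \<Rightarrow> bool) \<Rightarrow> ('b \<Rightarrow> 'b \<Rightarrow> bool) \<Rightarrow> ('a \<times> 'b) set \<Rightarrow> 'a eff \<Rightarrow> 'b eff \<Rightarrow> bdom" where
  "tensor_inf leA leB P lA lB = binf ((\<lambda>(\<sigma>A, \<sigma>B). pure_tensor leA leB \<sigma>A \<sigma>B lA lB) ` P)"

lemma min_tensorE:
  assumes "\<Phi> \<in> min_tensor SA leA EA SB leB EB"
  obtains P where "P \<subseteq> SA \<times> SB" "P \<noteq> {}"
    and "\<And>lA lB. lA \<in> EA \<Longrightarrow> lB \<in> EB \<Longrightarrow> \<Phi> lA lB = tensor_inf leA leB P lA lB"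
  using assms unfolding min_tensor_def tensor_inf_def by blast

lemma tensor_inf_eq_BY_iff:
  "P \<noteq> {} \<Longrightarrow> tensor_inf leA leB P lA lB = BY \<longleftrightarrow>
     (\<forall>(\<sigma>A, \<sigma>B)\<in>P. eval leA lA \<sigma>A = BY \<and> eval leB lB \<sigma>B = BY)"
  unfolding tensor_inf_def pure_tensor_def by (auto simp: binf_eq_BY_iff bprod_eq_BY_iff)

lemma tensor_inf_eq_BN_iff:
  "P \<noteq> {} \<Longrightarrow> tensor_inf leA leB P lA lB = BN \<longleftrightarrow>
     (\<forall>(\<sigma>A, \<sigma>B)\<in>P. bprod (eval leA lA \<sigma>A) (eval leB lB \<sigma>B) = BN)"
  unfolding tensor_inf_def pure_tensor_def by (auto simp: binf_eq_BN_iff)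

lemma tensor_inf_unit_eq_BBot:
  assumes "P \<noteq> {}"
    and unit: "\<forall>(\<sigma>A, \<sigma>B)\<in>P. eval leB lY \<sigma>B = BY"
    and "tensor_inf leA leB P lA lY = BBot"
  shows "\<exists>(\<sigma>A, \<sigma>B)\<in>P. eval leA lA \<sigma>A \<noteq> BY"
    and "\<exists>(\<sigma>A, \<sigma>B)\<in>P. eval leA lA \<sigma>A \<noteq> BN"
proof -
  have "tensor_inf leA leB P lA lY = binf ((\<lambda>(\<sigma>A, \<sigma>B). eval leA lA \<sigma>A) ` P)"
    unfolding tensor_inf_def pure_tensor_def
    using unit by (auto intro!: arg_cong[where f = binf] image_cong)
  with assms(3) have "binf ((\<lambda>(\<sigma>A, \<sigma>B). eval leA lA \<sigma>A) ` P) = BBot"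
    by simp
  then show "\<exists>(\<sigma>A, \<sigma>B)\<in>P. eval leA lA \<sigma>A \<noteq> BY" and "\<exists>(\<sigma>A, \<sigma>B)\<in>P. eval leA lA \<sigma>A \<noteq> BN"
    using assms(1) by (auto simp: binf_eq_BBot_iff)
qed

lemma tensor_inf_not_BY:
  "(\<sigma>A, \<sigma>B) \<in> P \<Longrightarrow> eval leA lA \<sigma>A \<noteq> BY \<Longrightarrow> tensor_inf leA leB P lA lB \<noteq> BY"
  by (subst tensor_inf_eq_BY_iff) auto

lemma tensor_inf_not_both_BN:
  assumes "(\<sigma>A, \<sigma>B) \<in> P" "eval leA lA \<sigma>A \<noteq> BN"
    and "binf {eval leB lB \<sigma>B, eval leB lB' \<sigma>B} \<noteq> BN"
  shows "\<not> (tensor_inf leA leB P lA lB = BN \<and> tensor_inf leA leB P lA lB' = BN)"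
proof
  assume "tensor_inf leA leB P lA lB = BN \<and> tensor_inf leA leB P lA lB' = BN"
  then have "bprod (eval leA lA \<sigma>A) (eval leB l \<sigma>B) = BN" if "l \<in> {lB, lB'}" for l
    using that assms(1) by (subst (asm) (1 2) tensor_inf_eq_BN_iff) auto
  then have "eval leB lB \<sigma>B = BN" "eval leB lB' \<sigma>B = BN"
    using assms(2) bprod_eq_BN_right by blast+
  with assms(3) show False
    by (simp add: binf_eq_BN_iff)
qed

theorem mainTheorem20:
  fixes SA :: "'a set" and leA :: "'a \<Rightarrow> 'a \<Rightarrow> bool" and EA :: "'a eff set"
    and SB :: "'b set" and leB :: "'b \<Rightarrow> 'b \<Rightarrow> bool" and EB :: "'b eff set"
    and \<Phi> :: "'a eff \<Rightarrow> 'b eff \<Rightarrow> bdom"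
    and lA :: "'a eff" and lB lB' :: "'b eff"
  assumes "chu_space SA leA EA"
    and "chu_space SB leB EB"
    and "\<Phi> \<in> min_tensor SA leA EA SB leB EB"
    and "lA \<in> EA"
    and "\<Phi> lA (eff_Y SB leB) = BBot"
    and "lB \<in> EB" and "lB' \<in> EB"
    and "\<forall>\<sigma>\<in>SB. binf {eval leB lB \<sigma>, eval leB lB' \<sigma>} = eval leB eff_bot \<sigma>"
  shows "(\<Phi> lA lB, \<Phi> lA lB') \<in> {(BBot, BN), (BN, BBot), (BBot, BBot)}"
proof -
  obtain P where P: "P \<subseteq> SA \<times> SB" "P \<noteq> {}"
    and \<Phi>_eq: "\<And>l l'. l \<in> EA \<Longrightarrow> l' \<in> EB \<Longrightarrow> \<Phi> l l' = tensor_inf leA leB P l l'"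
    using min_tensorE[OF assms(3)] by blast
  have SB: "space_of_states SB leB" "eff_Y SB leB \<in> EB"
    using assms(2) unfolding chu_space_def by auto
  have unit: "\<forall>(\<sigma>A, \<sigma>B)\<in>P. eval leB (eff_Y SB leB) \<sigma>B = BY"
    using P(1) eval_eff_Y[OF SB(1)] by auto
  have "tensor_inf leA leB P lA (eff_Y SB leB) = BBot"
    using assms(4,5) SB(2) \<Phi>_eq by simp
  note unit_BBot = tensor_inf_unit_eq_BBot[OF P(2) unit this]
  obtain pA pB where "(pA, pB) \<in> P" "eval leA lA pA \<noteq> BY"
    using unit_BBot(1) by blast
  then have not_BY: "\<Phi> lA l \<noteq> BY" if "l \<in> EB" for l
    using that assms(4) \<Phi>_eq tensor_inf_not_BY by metis
  obtain qA qB where q: "(qA, qB) \<in> P" "eval leA lA qA \<noteq> BN"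
    using unit_BBot(2) by blast
  have "binf {eval leB lB qB, eval leB lB' qB} \<noteq> BN"
    using q(1) P(1) assms(8) by (auto simp: eval_eff_bot)
  with q have not_both_BN: "\<not> (\<Phi> lA lB = BN \<and> \<Phi> lA lB' = BN)"
    using assms(4,6,7) \<Phi>_eq tensor_inf_not_both_BN by metis
  show ?thesis
    using not_BY[OF assms(6)] not_BY[OF assms(7)] not_both_BN
    by (cases "\<Phi> lA lB"; cases "\<Phi> lA lB'") auto
qed

end
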